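(* Let $F:[0,\infty)\to\mathbb{R}$ be $C^{1,1}$ with $F'(0)=0$ and set $M:=\max\{1,\limsup_{t\downarrow0}|F'(t)|/t\}$. There exist $T>0$, $L=L(M)>1$ (depending only on $M$), and an $L$-bi-Lipschitz map $G:B^2(0,T)\to B^2(0,T)$ with $G(0)=0$ such that for each $s\in\mathbb{S}^1$ the curve $t\mapsto(G(ts),F(|G(ts)|))$ is horizontal. Moreover, $|G(st)|=|G(s't)|$ for any $s,s'\in\mathbb{S}^1$ and $t\in[0,T)$.
   Context: $B^2(0,T)$ is the open Euclidean disc of radius $T$ centred at the origin of $\mathbb{R}^2$, with the Euclidean metric; $\mathbb{S}^1$ is the unit circle. An absolutely continuous curve $(x(t),y(t),z(t))$ in $\mathbb{R}^3$ is horizontal if $z'+\tfrac12x'y-\tfrac12xy'=0$ almost everywhere. $G$ is $L$-bi-Lipschitz if $L^{-1}|a-b|\le|G(a)-G(b)|\le L|a-b|$. *)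

theory Defs
  imports "HOL-Analysis.Analysis"
begin

definition abs_cont_on_interval :: "real \<Rightarrow> real \<Rightarrow> (real \<Rightarrow> 'a::real_normed_vector) \<Rightarrow> bool" where
  "abs_cont_on_interval c d \<gamma> \<longleftrightarrow>
     (\<forall>\<epsilon>>0. \<exists>\<delta>>0. \<forall>(n::nat) (a::nat \<Rightarrow> real) (b::nat \<Rightarrow> real).
        (\<forall>i<n. c \<le> a i \<and> a i \<le> b i \<and> b i \<le> d) \<and>
        (\<forall>i<n. \<forall>j<n. i \<noteq> j \<longrightarrow> b i \<le> a j \<or> b j \<le> a i) \<and>
        (\<Sum>i<n. b i - a i) < \<delta>
        \<longrightarrow> (\<Sum>i<n. norm (\<gamma> (b i) - \<gamma> (a i))) < \<epsilon>)"

definition abs_cont_on :: "real set \<Rightarrow> (real \<Rightarrow> 'a::real_normed_vector) \<Rightarrow> bool" where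
  "abs_cont_on I \<gamma> \<longleftrightarrow> (\<forall>c d. {c..d} \<subseteq> I \<longrightarrow> abs_cont_on_interval c d \<gamma>)"

text \<open>Horizontal curves in the Heisenberg group R^3 (coordinates (x,y,z)).\<close>
definition horizontal_on :: "real set \<Rightarrow> (real \<Rightarrow> real \<times> real \<times> real) \<Rightarrow> bool" where
  "horizontal_on I \<gamma> \<longleftrightarrow> abs_cont_on I \<gamma> \<and>
     (AE t in lborel. t \<in> I \<longrightarrow>
        (\<exists>x' y' z'. (\<gamma> has_vector_derivative (x', y', z')) (at t) \<and>
            z' + x' * fst (snd (\<gamma> t)) / 2 - fst (\<gamma> t) * y' / 2 = 0))"

definition bilipschitz_on :: "real \<Rightarrow> 'a::metric_space set \<Rightarrow> ('a \<Rightarrow> 'b::metric_space) \<Rightarrow> bool" where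
  "bilipschitz_on L S G \<longleftrightarrow>
     (\<forall>a\<in>S. \<forall>b\<in>S. dist a b / L \<le> dist (G a) (G b) \<and> dist (G a) (G b) \<le> L * dist a b)"

definition Mconst :: "(real \<Rightarrow> real) \<Rightarrow> real" where
  "Mconst F' = max 1 (real_of_ereal (Limsup (at_right 0) (\<lambda>t. ereal (\<bar>F' t\<bar> / t))))"

end

theory Submission
  imports Defs
begin

text \<open>
  G is a spiral map: it rotates the circle of radius r by an angle \<phi>(r) with
  \<phi>'(r) = 2 F'(r) / r^2. Along the ray t s = t cis \<alpha> the planar curve t cis (\<alpha> + \<phi> t)
  sweeps area at rate t^2 \<phi>'(t) / 2 = F'(t), and this is exactly the horizontality condition
  for the lift with height F(t). Since |F'(r)| \<le> (M + 1) r near 0, we get r |\<phi>'(r)| \<le> 2 (M + 1),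
  which makes both G and its inverse, the spiral with angle -\<phi>, (2 M + 3)-Lipschitz.
\<close>

lemma norm_cis_diff_le: "cmod (cis a - cis b) \<le> \<bar>a - b\<bar>"
proof -
  define x where "x = (a - b) / 2"
  then have ab: "a - b = 2 * x" by simp
  have "(cmod (cis a - cis b))\<^sup>2 = 2 - 2 * cos (a - b)"
    by (simp add: cmod_power2 power2_diff cos_diff algebra_simps)
  also have "\<dots> = (2 * sin x)\<^sup>2"
    by (simp only: ab cos_double_sin) (simp add: power_mult_distrib)
  also have "\<dots> \<le> (a - b)\<^sup>2"
    using abs_sin_x_le_abs_x[of x] by (simp add: ab power_mult_distrib abs_le_square_iff[symmetric])
  finally show ?thesis
    by (simp add: abs_le_square_iff[symmetric])
qed

lemma lipschitz_on_real_derivative_bound: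
  fixes f f' :: "real \<Rightarrow> real"
  assumes "convex S" "0 \<le> B"
    and "\<And>x. x \<in> S \<Longrightarrow> (f has_real_derivative f' x) (at x within S)"
    and "\<And>x. x \<in> S \<Longrightarrow> \<bar>f' x\<bar> \<le> B"
  shows "B-lipschitz_on S f"
proof (rule lipschitz_onI)
  fix x y assume "x \<in> S" "y \<in> S"
  then show "dist (f x) (f y) \<le> B * dist x y"
    using field_differentiable_bound[of S f f' B x y] assms by (simp add: dist_norm)
qed fact

lemma bilipschitz_onI:
  assumes "L-lipschitz_on S G" "L-lipschitz_on (G ` S) H" "\<And>x. x \<in> S \<Longrightarrow> H (G x) = x"
  shows "bilipschitz_on L S G"
  unfolding bilipschitz_on_def
proof (intro ballI conjI)
  fix a b assume ab: "a \<in> S" "b \<in> S"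
  show "dist (G a) (G b) \<le> L * dist a b"
    using lipschitz_onD[OF assms(1) ab] .
  have "dist a b \<le> L * dist (G a) (G b)"
    using lipschitz_onD[OF assms(2), of "G a" "G b"] ab assms(3) by simp
  then show "dist a b / L \<le> dist (G a) (G b)"
    using lipschitz_on_nonneg[OF assms(1)]
    by (cases "L = 0") (simp_all add: divide_le_eq mult.commute)
qed

definition spiral :: "(real \<Rightarrow> real) \<Rightarrow> complex \<Rightarrow> complex" where
  "spiral \<psi> z = z * cis (\<psi> (cmod z))"

lemma norm_spiral [simp]: "cmod (spiral \<psi> z) = cmod z"
  by (simp add: spiral_def norm_mult)

lemma spiral_0 [simp]: "spiral \<psi> 0 = 0"
  by (simp add: spiral_def)

lemma spiral_uminus_spiral: "spiral (\<lambda>r. - \<psi> r) (spiral \<psi> z) = z"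
  by (simp add: spiral_def norm_mult mult.assoc cis_mult)

lemma spiral_of_real_cis:
  "0 \<le> t \<Longrightarrow> spiral \<psi> (of_real t * cis \<alpha>) = of_real t * cis (\<alpha> + \<psi> t)"
  by (simp add: spiral_def norm_mult mult.assoc flip: cis_mult)

lemma dist_spiral_le_of_norm_le:
  fixes \<psi> \<psi>' :: "real \<Rightarrow> real"
  assumes "0 \<le> c"
    and deriv: "\<And>r. 0 < r \<Longrightarrow> r < T \<Longrightarrow> (\<psi> has_real_derivative \<psi>' r) (at r)"
    and bound: "\<And>r. 0 < r \<Longrightarrow> r < T \<Longrightarrow> r * \<bar>\<psi>' r\<bar> \<le> c"
    and "cmod a < T" "cmod b \<le> cmod a"
  shows "dist (spiral \<psi> a) (spiral \<psi> b) \<le> (1 + c) * dist a b"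
proof (cases "b = 0")
  case True
  then show ?thesis using \<open>0 \<le> c\<close> by (simp add: dist_norm algebra_simps)
next
  case False
  let ?A = "\<psi> (cmod a)" and ?B = "\<psi> (cmod b)"
  \<comment> \<open>On [|b|, |a|] we have |\<psi>'| \<le> c / |b|, so the extra rotation costs at most c (|a| - |b|).\<close>
  have "norm (?A - ?B) \<le> c / cmod b * norm (cmod a - cmod b)"
  proof (rule field_differentiable_bound[of "{cmod b..cmod a}" \<psi> \<psi>'])
    fix r assume r: "r \<in> {cmod b..cmod a}"
    have "0 < cmod b" using False by simp
    with r \<open>cmod a < T\<close> have "0 < r" "r < T" by (auto simp del: zero_less_norm_iff)
    then show "(\<psi> has_field_derivative \<psi>' r) (at r within {cmod b..cmod a})"
      using deriv has_field_derivative_at_within by blast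
    have "\<bar>\<psi>' r\<bar> \<le> c / r"
      using bound \<open>0 < r\<close> \<open>r < T\<close> by (simp add: field_simps mult.commute)
    also have "\<dots> \<le> c / cmod b"
      using \<open>0 \<le> c\<close> \<open>0 < cmod b\<close> \<open>0 < r\<close> r by (intro divide_left_mono) auto
    finally show "norm (\<psi>' r) \<le> c / cmod b" by simp
  qed (use \<open>cmod b \<le> cmod a\<close> in auto)
  then have angle: "cmod b * \<bar>?A - ?B\<bar> \<le> c * (cmod a - cmod b)"
    using False \<open>cmod b \<le> cmod a\<close> by (simp add: field_simps)
  have "spiral \<psi> a - spiral \<psi> b = (a - b) * cis ?A + b * (cis ?A - cis ?B)"
    by (simp add: spiral_def algebra_simps)
  then have "dist (spiral \<psi> a) (spiral \<psi> b) \<le> cmod (a - b) + cmod b * cmod (cis ?A - cis ?B)"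
    by (metis dist_norm norm_cis mult.right_neutral norm_mult norm_triangle_ineq)
  also have "\<dots> \<le> cmod (a - b) + c * (cmod a - cmod b)"
    using angle norm_cis_diff_le[of ?A ?B] mult_left_mono[of _ _ "cmod b"] by force
  also have "\<dots> \<le> (1 + c) * dist a b"
    using mult_left_mono[OF norm_triangle_ineq2[of a b] \<open>0 \<le> c\<close>] by (simp add: dist_norm algebra_simps)
  finally show ?thesis .
qed

lemma lipschitz_on_spiral:
  fixes \<psi> \<psi>' :: "real \<Rightarrow> real"
  assumes "0 \<le> c"
    and "\<And>r. 0 < r \<Longrightarrow> r < T \<Longrightarrow> (\<psi> has_real_derivative \<psi>' r) (at r)"
    and "\<And>r. 0 < r \<Longrightarrow> r < T \<Longrightarrow> r * \<bar>\<psi>' r\<bar> \<le> c"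
  shows "(1 + c)-lipschitz_on (ball 0 T) (spiral \<psi>)"
proof (rule lipschitz_onI)
  fix a b :: complex assume "a \<in> ball 0 T" "b \<in> ball 0 T"
  then have "cmod a < T" "cmod b < T" by auto
  show "dist (spiral \<psi> a) (spiral \<psi> b) \<le> (1 + c) * dist a b"
  proof (cases "cmod b \<le> cmod a")
    case True
    then show ?thesis using dist_spiral_le_of_norm_le[OF assms \<open>cmod a < T\<close>] by blast
  next
    case False
    then have "dist (spiral \<psi> b) (spiral \<psi> a) \<le> (1 + c) * dist b a"
      using dist_spiral_le_of_norm_le[OF assms \<open>cmod b < T\<close>] by simp
    then show ?thesis by (simp add: dist_commute)
  qed
qed (use \<open>0 \<le> c\<close> in simp)

lemma bilipschitz_on_spiral:
  fixes \<psi> \<psi>' :: "real \<Rightarrow> real"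
  assumes "0 \<le> c"
    and "\<And>r. 0 < r \<Longrightarrow> r < T \<Longrightarrow> (\<psi> has_real_derivative \<psi>' r) (at r)"
    and "\<And>r. 0 < r \<Longrightarrow> r < T \<Longrightarrow> r * \<bar>\<psi>' r\<bar> \<le> c"
  shows "bilipschitz_on (1 + c) (ball 0 T) (spiral \<psi>)"
proof (rule bilipschitz_onI)
  show "(1 + c)-lipschitz_on (ball 0 T) (spiral \<psi>)"
    using lipschitz_on_spiral[OF assms] .
  have "(1 + c)-lipschitz_on (ball 0 T) (spiral (\<lambda>r. - \<psi> r))"
    using assms by (intro lipschitz_on_spiral[where \<psi>' = "\<lambda>r. - \<psi>' r"]) (auto intro: DERIV_minus)
  then show "(1 + c)-lipschitz_on (spiral \<psi> ` ball 0 T) (spiral (\<lambda>r. - \<psi> r))"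
    by (rule lipschitz_on_subset) auto
qed (rule spiral_uminus_spiral)

lemma lipschitz_on_imp_abs_cont_on:
  fixes \<gamma> :: "real \<Rightarrow> 'a::real_normed_vector"
  assumes "C-lipschitz_on I \<gamma>"
  shows "abs_cont_on I \<gamma>"
  unfolding abs_cont_on_def abs_cont_on_interval_def
proof (intro allI impI)
  fix c d \<epsilon> :: real assume "{c..d} \<subseteq> I" "0 < \<epsilon>"
  have "0 \<le> C" using lipschitz_on_nonneg[OF assms] .
  show "\<exists>\<delta>>0. \<forall>n a b. (\<forall>i<n. c \<le> a i \<and> a i \<le> b i \<and> b i \<le> d) \<and>
          (\<forall>i<n. \<forall>j<n. i \<noteq> j \<longrightarrow> b i \<le> a j \<or> b j \<le> a i) \<and> (\<Sum>i<n. b i - a i) < \<delta> \<longrightarrow>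
          (\<Sum>i<n. norm (\<gamma> (b i) - \<gamma> (a i))) < \<epsilon>"
  proof (intro exI[of _ "\<epsilon> / (C + 1)"] conjI allI impI)
    show "0 < \<epsilon> / (C + 1)" using \<open>0 < \<epsilon>\<close> \<open>0 \<le> C\<close> by simp
    fix n a b
    assume intervals: "(\<forall>i<n. c \<le> a i \<and> a i \<le> b i \<and> b i \<le> d) \<and>
      (\<forall>i<n. \<forall>j<n. i \<noteq> j \<longrightarrow> b i \<le> a j \<or> b j \<le> a i) \<and> (\<Sum>i<n. b i - a i) < \<epsilon> / (C + 1)"
    have "(\<Sum>i<n. norm (\<gamma> (b i) - \<gamma> (a i))) \<le> (\<Sum>i<n. C * (b i - a i))"
    proof (rule sum_mono)
      fix i assume "i \<in> {..<n}"
      with intervals have "a i \<in> {c..d}" "b i \<in> {c..d}" "a i \<le> b i" by auto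
      then have "a i \<in> I" "b i \<in> I" "a i \<le> b i" using \<open>{c..d} \<subseteq> I\<close> by auto
      then show "norm (\<gamma> (b i) - \<gamma> (a i)) \<le> C * (b i - a i)"
        using lipschitz_on_normD[OF assms, of "b i" "a i"] by simp
    qed
    also have "\<dots> = C * (\<Sum>i<n. b i - a i)"
      by (simp add: sum_distrib_left)
    also have "\<dots> \<le> C * (\<epsilon> / (C + 1))"
      using intervals \<open>0 \<le> C\<close> by (intro mult_left_mono) auto
    also have "\<dots> < \<epsilon>"
      using \<open>0 < \<epsilon>\<close> \<open>0 \<le> C\<close> by (simp add: field_simps)
    finally show "(\<Sum>i<n. norm (\<gamma> (b i) - \<gamma> (a i))) < \<epsilon>" .
  qed
qed

definition horizontal_at :: "(real \<Rightarrow> real \<times> real \<times> real) \<Rightarrow> real \<Rightarrow> bool" where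
  "horizontal_at \<gamma> t \<longleftrightarrow>
     (\<exists>x' y' z'. (\<gamma> has_vector_derivative (x', y', z')) (at t) \<and>
        z' + x' * fst (snd (\<gamma> t)) / 2 - fst (\<gamma> t) * y' / 2 = 0)"

lemma horizontal_onI:
  assumes "C-lipschitz_on I \<gamma>" "countable N" "\<And>t. t \<in> I - N \<Longrightarrow> horizontal_at \<gamma> t"
  shows "horizontal_on I \<gamma>"
  unfolding horizontal_on_def
proof
  show "abs_cont_on I \<gamma>" using lipschitz_on_imp_abs_cont_on[OF assms(1)] .
  show "AE t in lborel. t \<in> I \<longrightarrow> (\<exists>x' y' z'. (\<gamma> has_vector_derivative (x', y', z')) (at t) \<and>
          z' + x' * fst (snd (\<gamma> t)) / 2 - fst (\<gamma> t) * y' / 2 = 0)"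
    using AE_not_in[OF countable_imp_null_set_lborel[OF assms(2)]]
    by eventually_elim (use assms(3) in \<open>auto simp: horizontal_at_def\<close>)
qed

lemma horizontal_at_transform_within_open:
  assumes "horizontal_at \<gamma> t" "open S" "t \<in> S" "\<And>u. u \<in> S \<Longrightarrow> \<gamma> u = \<delta> u"
  shows "horizontal_at \<delta> t"
proof -
  obtain x' y' z' where "(\<gamma> has_vector_derivative (x', y', z')) (at t)"
    and "z' + x' * fst (snd (\<gamma> t)) / 2 - fst (\<gamma> t) * y' / 2 = 0"
    using assms(1) unfolding horizontal_at_def by blast
  moreover from this(1) have "(\<delta> has_vector_derivative (x', y', z')) (at t)"
    by (rule has_vector_derivative_transform_within_open) (use assms(2-4) in auto)
  ultimately show ?thesis
    unfolding horizontal_at_def using assms(3,4) by auto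
qed

lemma horizontal_at_polar_curve:
  fixes \<theta> h :: "real \<Rightarrow> real"
  assumes "(\<theta> has_real_derivative \<theta>') (at t)" "(h has_real_derivative h') (at t)"
    and "2 * h' = t\<^sup>2 * \<theta>'"
  shows "horizontal_at (\<lambda>u. (u * cos (\<theta> u), u * sin (\<theta> u), h u)) t"
proof -
  let ?S = "sin (\<theta> t)" and ?C = "cos (\<theta> t)"
  have "((\<lambda>u. u * cos (\<theta> u)) has_real_derivative ?C - t * ?S * \<theta>') (at t)"
    "((\<lambda>u. u * sin (\<theta> u)) has_real_derivative ?S + t * ?C * \<theta>') (at t)"
    using assms(1) by (auto intro!: derivative_eq_intros)
  then have deriv: "((\<lambda>u. (u * cos (\<theta> u), u * sin (\<theta> u), h u)) has_vector_derivative
      (?C - t * ?S * \<theta>', ?S + t * ?C * \<theta>', h')) (at t)"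
    using assms(2) unfolding has_real_derivative_iff_has_vector_derivative
    by (intro has_vector_derivative_Pair)
  have identity: "h' + (C - t * S * \<theta>') * (t * S) / 2 - (t * C) * (S + t * C * \<theta>') / 2
      = h' - t\<^sup>2 * \<theta>' * (S\<^sup>2 + C\<^sup>2) / 2" for C S
    by (simp add: field_simps power2_eq_square)
  show ?thesis
    unfolding horizontal_at_def
    by (intro exI conjI, rule deriv) (use identity[of ?C ?S] assms(3) in simp)
qed

lemma lipschitz_on_lift:
  fixes p :: "'a::metric_space \<Rightarrow> complex" and h :: "'a \<Rightarrow> real"
  assumes "A-lipschitz_on S p" "B-lipschitz_on S h"
  shows "(A + B)-lipschitz_on S (\<lambda>x. (Re (p x), Im (p x), h x))"
proof (rule lipschitz_onI)
  fix x y assume "x \<in> S" "y \<in> S"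
  have "dist (Re (p x), Im (p x), h x) (Re (p y), Im (p y), h y)
      = sqrt ((dist (p x) (p y))\<^sup>2 + (dist (h x) (h y))\<^sup>2)"
    by (simp add: dist_Pair_Pair dist_real_def dist_complex_def cmod_power2 add.assoc)
  also have "\<dots> \<le> dist (p x) (p y) + dist (h x) (h y)"
    by (rule sqrt_sum_squares_le_sum) simp_all
  also have "\<dots> \<le> (A + B) * dist x y"
    using lipschitz_onD[OF assms(1)] lipschitz_onD[OF assms(2)] \<open>x \<in> S\<close> \<open>y \<in> S\<close>
    by (simp add: distrib_right add_mono)
  finally show "dist (Re (p x), Im (p x), h x) (Re (p y), Im (p y), h y) \<le> (A + B) * dist x y" .
qed (use lipschitz_on_nonneg[OF assms(1)] lipschitz_on_nonneg[OF assms(2)] in simp)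

lemma lipschitz_on_continuous_derivative:
  fixes f f' :: "real \<Rightarrow> real"
  assumes "\<And>x. x \<in> {a..b} \<Longrightarrow> (f has_real_derivative f' x) (at x within {a..b})"
    and "continuous_on {a..b} f'"
  obtains B where "B-lipschitz_on {a..b} f"
proof -
  obtain B where B: "\<And>x. x \<in> {a..b} \<Longrightarrow> \<bar>f' x\<bar> \<le> B"
    using compact_imp_bounded[OF compact_continuous_image[OF assms(2) compact_Icc]]
    unfolding bounded_iff by (metis imageI real_norm_def)
  have "\<bar>B\<bar>-lipschitz_on {a..b} f"
    by (rule lipschitz_on_real_derivative_bound) (auto intro: assms(1) order_trans[OF B abs_ge_self])
  then show thesis by (rule that)
qed

lemma horizontal_on_spiral_lift:
  fixes F F' \<phi> :: "real \<Rightarrow> real"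
  assumes F: "\<And>t. 0 \<le> t \<Longrightarrow> (F has_real_derivative F' t) (at t within {0..})"
    and F'_cont: "continuous_on {0..T} F'"
    and \<phi>: "\<And>t. 0 < t \<Longrightarrow> t < T \<Longrightarrow> (\<phi> has_real_derivative 2 * F' t / t\<^sup>2) (at t)"
    and spiral: "A-lipschitz_on (ball 0 T) (spiral \<phi>)" and "s \<in> sphere 0 1"
  shows "horizontal_on {0..<T} (\<lambda>t. (Re (spiral \<phi> (of_real t * s)), Im (spiral \<phi> (of_real t * s)),
           F (cmod (spiral \<phi> (of_real t * s)))))"
proof -
  have "cmod s = 1" using \<open>s \<in> sphere 0 1\<close> by simp
  then have s: "s = cis (Arg s)" using rcis_cmod_Arg[of s] by (simp add: rcis_def)
  have ray: "A-lipschitz_on {0..<T} (\<lambda>t. spiral \<phi> (of_real t * s))"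
  proof (rule lipschitz_onI)
    fix t u :: real assume "t \<in> {0..<T}" "u \<in> {0..<T}"
    moreover have "dist (of_real t * s) (of_real u * s) = dist t u"
      using \<open>cmod s = 1\<close> by (simp add: dist_norm norm_mult flip: left_diff_distrib of_real_diff)
    ultimately show "dist (spiral \<phi> (of_real t * s)) (spiral \<phi> (of_real u * s)) \<le> A * dist t u"
      using lipschitz_onD[OF spiral, of "of_real t * s" "of_real u * s"] \<open>cmod s = 1\<close>
      by (simp add: norm_mult)
  qed (rule lipschitz_on_nonneg[OF spiral])
  obtain B where "B-lipschitz_on {0..T} F"
    using lipschitz_on_continuous_derivative[OF DERIV_subset[OF F] F'_cont] by auto
  then have "B-lipschitz_on {0..<T} (\<lambda>t. F (cmod (spiral \<phi> (of_real t * s))))"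
    by (rule lipschitz_on_transform[OF lipschitz_on_subset]) (auto simp: norm_mult \<open>cmod s = 1\<close>)
  note lipschitz = lipschitz_on_lift[OF ray this]
  have "horizontal_at (\<lambda>t. (Re (spiral \<phi> (of_real t * s)), Im (spiral \<phi> (of_real t * s)),
      F (cmod (spiral \<phi> (of_real t * s))))) t" if "0 < t" "t < T" for t
  proof -
    have "(F has_real_derivative F' t) (at t within {0..})"
      using F \<open>0 < t\<close> by simp
    moreover have "at t within {0..} = at t"
      using \<open>0 < t\<close> by (intro at_within_interior) auto
    ultimately have "horizontal_at (\<lambda>u. (u * cos (Arg s + \<phi> u), u * sin (Arg s + \<phi> u), F u)) t"
      using \<phi>[OF that] \<open>0 < t\<close>
      by (intro horizontal_at_polar_curve[where \<theta>' = "2 * F' t / t\<^sup>2"])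
         (auto intro!: derivative_eq_intros)
    then show ?thesis
      by (rule horizontal_at_transform_within_open[where S = "{0<..}"])
         (use \<open>0 < t\<close> in \<open>auto simp: spiral_of_real_cis[where \<alpha> = "Arg s", folded s] norm_mult\<close>)
  qed
  then show ?thesis
    by (intro horizontal_onI[OF lipschitz, of "{0}"]) auto
qed

text \<open>
  The angle is normalised at T, not at 0: 2 F'(u) / u^2 may behave like 1 / u, so the angle
  can wind infinitely often as r \<rightarrow> 0 without spoiling the Lipschitz bounds.
\<close>
definition twist_angle :: "(real \<Rightarrow> real) \<Rightarrow> real \<Rightarrow> real \<Rightarrow> real" where
  "twist_angle F' T r = - integral {r..T} (\<lambda>u. 2 * F' u / u\<^sup>2)"

lemma has_real_derivative_twist_angle:
  assumes "continuous_on {0<..T} F'" "0 < r" "r < T"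
  shows "(twist_angle F' T has_real_derivative 2 * F' r / r\<^sup>2) (at r)"
proof -
  have "continuous_on {r/2..T} (\<lambda>u. 2 * F' u / u\<^sup>2)"
    using assms by (intro continuous_intros continuous_on_subset[OF assms(1)]) auto
  then have "((\<lambda>x. integral {x..T} (\<lambda>u. 2 * F' u / u\<^sup>2)) has_real_derivative - (2 * F' r / r\<^sup>2))
      (at r within {r/2..T})"
    by (rule integral_has_real_derivative') (use assms in auto)
  moreover have "at r within {r/2..T} = at r"
    using assms by (intro at_within_interior) auto
  ultimately show ?thesis
    unfolding twist_angle_def [abs_def] using DERIV_minus by fastforce
qed

lemma twisted_spiral_bilipschitz:
  fixes F' :: "real \<Rightarrow> real"
  assumes "continuous_on {0<..T} F'" "0 \<le> c" "\<And>t. 0 < t \<Longrightarrow> t < T \<Longrightarrow> \<bar>F' t\<bar> \<le> c * t"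
  shows "(1 + 2 * c)-lipschitz_on (ball 0 T) (spiral (twist_angle F' T))"
    and "bilipschitz_on (1 + 2 * c) (ball 0 T) (spiral (twist_angle F' T))"
proof -
  have deriv: "(twist_angle F' T has_real_derivative 2 * F' r / r\<^sup>2) (at r)" if "0 < r" "r < T" for r
    using has_real_derivative_twist_angle[OF assms(1) that] .
  have bound: "r * \<bar>2 * F' r / r\<^sup>2\<bar> \<le> 2 * c" if "0 < r" "r < T" for r
    using assms(3)[OF that] that by (simp add: abs_mult power2_eq_square field_simps)
  show "(1 + 2 * c)-lipschitz_on (ball 0 T) (spiral (twist_angle F' T))"
    and "bilipschitz_on (1 + 2 * c) (ball 0 T) (spiral (twist_angle F' T))"
    using \<open>0 \<le> c\<close> by (simp_all add: lipschitz_on_spiral[OF _ deriv bound] bilipschitz_on_spiral[OF _ deriv bound])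
qed

lemma eventually_le_Mconst:
  fixes F' :: "real \<Rightarrow> real"
  assumes "\<And>x y. 0 \<le> x \<Longrightarrow> 0 \<le> y \<Longrightarrow> \<bar>F' x - F' y\<bar> \<le> K * \<bar>x - y\<bar>" and "F' 0 = 0"
  shows "\<forall>\<^sub>F t in at_right 0. \<bar>F' t\<bar> \<le> (Mconst F' + 1) * t"
proof -
  define l where "l = Limsup (at_right 0) (\<lambda>t. ereal (\<bar>F' t\<bar> / t))"
  have "l \<le> ereal K"
    unfolding l_def
  proof (rule Limsup_bounded)
    show "\<forall>\<^sub>F t in at_right 0. ereal (\<bar>F' t\<bar> / t) \<le> ereal K"
      unfolding eventually_at_right_field
      using assms(1)[of _ 0] \<open>F' 0 = 0\<close> by (intro exI[of _ 1]) (auto simp: divide_le_eq mult.commute)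
  qed
  then have "l < ereal (Mconst F' + 1)"
    by (cases l) (auto simp: Mconst_def l_def[symmetric])
  then have "\<forall>\<^sub>F t in at_right 0. ereal (\<bar>F' t\<bar> / t) < ereal (Mconst F' + 1)"
    unfolding l_def by (rule Limsup_lessD)
  moreover have "\<forall>\<^sub>F t in at_right 0. 0 < (t::real)"
    by (simp add: eventually_at_right_less)
  ultimately show ?thesis
    by eventually_elim (simp add: divide_less_eq)
qed

theorem lemma5p3:
  shows "\<exists>Lf :: real \<Rightarrow> real. (\<forall>m\<ge>1. Lf m > 1) \<and>
    (\<forall>(F :: real \<Rightarrow> real) (F' :: real \<Rightarrow> real).
       (\<forall>t\<ge>0. (F has_real_derivative F' t) (at t within {0..})) \<and>
       (\<exists>K. \<forall>x\<ge>0. \<forall>y\<ge>0. \<bar>F' x - F' y\<bar> \<le> K * \<bar>x - y\<bar>) \<and>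
       F' 0 = 0
       \<longrightarrow>
       (\<exists>T>0. \<exists>G :: complex \<Rightarrow> complex.
          bilipschitz_on (Lf (Mconst F')) (ball 0 T) G \<and>
          G ` ball 0 T \<subseteq> ball 0 T \<and> G 0 = 0 \<and>
          (\<forall>s\<in>sphere 0 1. horizontal_on {0..<T}
              (\<lambda>t. (Re (G (of_real t * s)), Im (G (of_real t * s)),
                     F (cmod (G (of_real t * s)))))) \<and>
          (\<forall>s\<in>sphere 0 1. \<forall>s'\<in>sphere 0 1. \<forall>t\<in>{0..<T}.
              cmod (G (of_real t * s)) = cmod (G (of_real t * s')))))"
proof (intro exI[of _ "\<lambda>m. 1 + 2 * (m + 1)"] conjI allI impI)
  fix F F' :: "real \<Rightarrow> real"
  assume "(\<forall>t\<ge>0. (F has_real_derivative F' t) (at t within {0..})) \<and>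
    (\<exists>K. \<forall>x\<ge>0. \<forall>y\<ge>0. \<bar>F' x - F' y\<bar> \<le> K * \<bar>x - y\<bar>) \<and> F' 0 = 0"
  then obtain K where dF: "\<And>t. 0 \<le> t \<Longrightarrow> (F has_real_derivative F' t) (at t within {0..})"
    and K: "\<And>x y. 0 \<le> x \<Longrightarrow> 0 \<le> y \<Longrightarrow> \<bar>F' x - F' y\<bar> \<le> K * \<bar>x - y\<bar>" and "F' 0 = 0"
    by blast
  obtain T where "0 < T" and ratio: "\<And>t. 0 < t \<Longrightarrow> t < T \<Longrightarrow> \<bar>F' t\<bar> \<le> (Mconst F' + 1) * t"
    using eventually_le_Mconst[OF K \<open>F' 0 = 0\<close>] unfolding eventually_at_right_field by auto
  have "continuous_on {0..} F'"
    using K K[of 0 1] by (intro lipschitz_on_continuous_on[of K]) (auto intro!: lipschitz_onI simp: dist_real_def)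
  then have F'_cont: "continuous_on {0..T} F'" "continuous_on {0<..T} F'"
    by (auto elim: continuous_on_subset)
  have "0 \<le> Mconst F' + 1" by (simp add: Mconst_def)
  note spiral = twisted_spiral_bilipschitz[OF F'_cont(2) this ratio]
  define G where "G = spiral (twist_angle F' T)"
  have "\<forall>s\<in>sphere 0 1. horizontal_on {0..<T}
      (\<lambda>t. (Re (G (of_real t * s)), Im (G (of_real t * s)), F (cmod (G (of_real t * s)))))"
    "G ` ball 0 T \<subseteq> ball 0 T" "G 0 = 0"
    "\<forall>s\<in>sphere 0 1. \<forall>s'\<in>sphere 0 1. \<forall>t\<in>{0..<T}. cmod (G (of_real t * s)) = cmod (G (of_real t * s'))"
    unfolding G_def
    using horizontal_on_spiral_lift[OF dF F'_cont(1) has_real_derivative_twist_angle[OF F'_cont(2)] spiral(1)]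
    by (auto simp: norm_mult)
  then show "\<exists>T>0. \<exists>G :: complex \<Rightarrow> complex. bilipschitz_on (1 + 2 * (Mconst F' + 1)) (ball 0 T) G \<and>
      G ` ball 0 T \<subseteq> ball 0 T \<and> G 0 = 0 \<and>
      (\<forall>s\<in>sphere 0 1. horizontal_on {0..<T}
          (\<lambda>t. (Re (G (of_real t * s)), Im (G (of_real t * s)), F (cmod (G (of_real t * s)))))) \<and>
      (\<forall>s\<in>sphere 0 1. \<forall>s'\<in>sphere 0 1. \<forall>t\<in>{0..<T}.
          cmod (G (of_real t * s)) = cmod (G (of_real t * s')))"
    using \<open>0 < T\<close> spiral(2)[folded G_def] by blast
qed simp

end
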